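(* Let $p^{(0)}\in[0,1]^n$ and let $p^{(1)},p^{(2)},p^{(3)},\dots$ be random vectors in $[0,1]^n$ such that for every $h\ge1$, conditionally on $(p^{(0)},\dots,p^{(h-1)})$, the vector $p^{(h)}$ is a probabilistic aggregate of $p^{(h-1)}$. Then: (1) for every $h\ge 0$ and every $i$, if $p^{(h)}_i\in\{0,1\}$ then $p^{(h+1)}_i=p^{(h)}_i$ almost surely; consequently, along the sequence any entry that has been set to $0$ or $1$ remains set, and the number of positive entries of $p^{(h+1)}$ is at most that of $p^{(h)}$; (2) (transitivity) for all $0\le h_1<h_2$, conditionally on $(p^{(0)},\dots,p^{(h_1)})$, the vector $p^{(h_2)}$ is a probabilistic aggregate of $p^{(h_1)}$.
   Context: A random vector $q\in[0,1]^n$ is a probabilistic aggregate of a vector $r\in[0,1]^n$ if: (i) $\mathbb{E}[q_i]=r_i$ for all $i$; (ii) $\sum_i q_i=\sum_i r_i$ (with probability one); (iii) for every $J\subseteq[n]$, $\mathbb{E}\big[\prod_{i\in J}q_i\big]\le\prod_{i\in J}r_i$ and $\mathbb{E}\big[\prod_{i\in J}(1-q_i)\big]\le\prod_{i\in J}(1-r_i)$. *)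

theory Defs
  imports "HOL-Probability.Probability"
begin

text \<open>Vectors in [0,1]^n are functions nat => real, only indices i < n matter.
  The sigma-algebra generated by the history p^(0),...,p^(h).\<close>
definition hist :: "'a measure \<Rightarrow> (nat \<Rightarrow> 'a \<Rightarrow> nat \<Rightarrow> real) \<Rightarrow> nat \<Rightarrow> nat \<Rightarrow> 'a measure" where
  "hist M p n h = sigma (space M)
     {{\<omega> \<in> space M. p k \<omega> i \<in> B} | k i B. k \<le> h \<and> i < n \<and> B \<in> sets (borel :: real measure)}"

definition cond_prob_aggregate ::
  "'a measure \<Rightarrow> 'a measure \<Rightarrow> ('a \<Rightarrow> nat \<Rightarrow> real) \<Rightarrow> ('a \<Rightarrow> nat \<Rightarrow> real) \<Rightarrow> nat \<Rightarrow> bool" where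
  "cond_prob_aggregate M F q r n \<longleftrightarrow>
     (\<forall>i<n. (\<lambda>\<omega>. q \<omega> i) \<in> borel_measurable M) \<and>
     (\<forall>i<n. AE \<omega> in M. 0 \<le> q \<omega> i \<and> q \<omega> i \<le> 1) \<and>
     (\<forall>i<n. AE \<omega> in M. real_cond_exp M F (\<lambda>\<omega>. q \<omega> i) \<omega> = r \<omega> i) \<and>
     (AE \<omega> in M. (\<Sum>i<n. q \<omega> i) = (\<Sum>i<n. r \<omega> i)) \<and>
     (\<forall>J \<subseteq> {..<n}. AE \<omega> in M.
        real_cond_exp M F (\<lambda>\<omega>. \<Prod>i\<in>J. q \<omega> i) \<omega> \<le> (\<Prod>i\<in>J. r \<omega> i)) \<and>
     (\<forall>J \<subseteq> {..<n}. AE \<omega> in M.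
        real_cond_exp M F (\<lambda>\<omega>. \<Prod>i\<in>J. 1 - q \<omega> i) \<omega> \<le> (\<Prod>i\<in>J. 1 - r \<omega> i))"

end

theory Submission
  imports Defs
begin

text \<open>If \<open>r\<^sub>i = 0\<close>, the nonnegative variable \<open>q\<^sub>i\<close> has conditional mean \<open>0\<close> on the
  history-measurable event \<open>{r\<^sub>i = 0}\<close>, so it vanishes there almost surely; the same argument
  for \<open>1 - q\<^sub>i\<close> handles \<open>r\<^sub>i = 1\<close>. Transitivity is the tower property: conditioning the
  one-step relations \<open>E[f(p\<^sup>h\<^sup>+\<^sup>1) | F\<^sub>h] \<le> f(p\<^sup>h)\<close> further on a coarser history chains
  them, since every \<open>f\<close> involved (a coordinate, or a product of coordinates or of their
  complements) is bounded, hence integrable.\<close>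

lemma (in finite_measure) real_cond_exp_nested_mono:
  assumes "subalgebra M F" "subalgebra F G" "integrable M f" "integrable M g"
    and "AE x in M. real_cond_exp M F f x \<le> g x"
  shows "AE x in M. real_cond_exp M G f x \<le> real_cond_exp M G g x"
proof -
  interpret F: finite_measure_subalgebra M F by unfold_locales fact
  interpret G: finite_measure_subalgebra M G
    using assms(1,2) by unfold_locales (auto simp: subalgebra_def)
  have "AE x in M. real_cond_exp M G f x = real_cond_exp M G (real_cond_exp M F f) x"
    using G.real_cond_exp_nested_subalg[OF assms(1-3)] by auto
  moreover have "AE x in M. real_cond_exp M G (real_cond_exp M F f) x \<le> real_cond_exp M G g x"
    using assms(3-5) by (intro G.real_cond_exp_mono) auto
  ultimately show ?thesis by auto
qed

lemma (in finite_measure) real_cond_exp_nested_eq: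
  assumes "subalgebra M F" "subalgebra F G" "integrable M f" "g \<in> borel_measurable M"
    and "AE x in M. real_cond_exp M F f x = g x"
  shows "AE x in M. real_cond_exp M G f x = real_cond_exp M G g x"
proof -
  interpret F: finite_measure_subalgebra M F by unfold_locales fact
  interpret G: finite_measure_subalgebra M G
    using assms(1,2) by unfold_locales (auto simp: subalgebra_def)
  have "AE x in M. real_cond_exp M G f x = real_cond_exp M G (real_cond_exp M F f) x"
    using G.real_cond_exp_nested_subalg[OF assms(1-3)] by auto
  moreover have "AE x in M. real_cond_exp M G (real_cond_exp M F f) x = real_cond_exp M G g x"
    using assms(3-5) F.real_cond_exp_int(1) by (intro G.real_cond_exp_cong) auto
  ultimately show ?thesis by auto
qed

lemma (in sigma_finite_subalgebra) real_cond_exp_eq_0_imp_eq_0: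
  assumes f: "integrable M f" and f_nonneg: "AE x in M. 0 \<le> f x"
    and cond_exp: "AE x in M. real_cond_exp M F f x = g x" and g: "g \<in> borel_measurable F"
  shows "AE x in M. g x = 0 \<longrightarrow> f x = 0"
proof -
  define A where "A = {x \<in> space F. g x = 0}"
  have A_F: "A \<in> sets F" unfolding A_def using g by measurable
  then have A_M: "A \<in> sets M" using subalg by (auto simp: subalgebra_def)
  have int: "integrable M (\<lambda>x. indicator A x * f x)"
    using integrable_mult_indicator[OF A_M f] by simp
  have "(\<integral>x. indicator A x * f x \<partial>M) = (\<integral>x. indicator A x * real_cond_exp M F f x \<partial>M)"
    using real_cond_exp_intg(2)[OF int] A_F f by simp
  also have "\<dots> = 0"
    using cond_exp subalg by (intro integral_eq_zero_AE) (auto simp: indicator_def A_def subalgebra_def)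
  finally have "AE x in M. indicator A x * f x = 0"
    using f_nonneg int by (subst integral_nonneg_eq_0_iff_AE[symmetric]) (auto simp: indicator_def)
  then show ?thesis using subalg by (auto simp: A_def indicator_def subalgebra_def)
qed

lemma (in finite_measure) cond_prob_aggregate_integrable:
  assumes "cond_prob_aggregate M F q r n" and J: "J \<subseteq> {..<n}"
  shows "integrable M (\<lambda>\<omega>. \<Prod>i\<in>J. q \<omega> i)" and "integrable M (\<lambda>\<omega>. \<Prod>i\<in>J. 1 - q \<omega> i)"
proof -
  have meas: "(\<lambda>\<omega>. q \<omega> i) \<in> borel_measurable M" if "i \<in> J" for i
    using assms that unfolding cond_prob_aggregate_def by blast
  have "AE \<omega> in M. \<forall>i\<in>{..<n}. 0 \<le> q \<omega> i \<and> q \<omega> i \<le> 1"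
    using assms unfolding cond_prob_aggregate_def by (subst AE_finite_all) auto
  then have bounds: "AE \<omega> in M. \<forall>i\<in>J. 0 \<le> q \<omega> i \<and> q \<omega> i \<le> 1"
    using J by auto
  have "AE \<omega> in M. \<bar>\<Prod>i\<in>J. q \<omega> i\<bar> \<le> 1 \<and> \<bar>\<Prod>i\<in>J. 1 - q \<omega> i\<bar> \<le> 1"
    using bounds by eventually_elim (auto simp: prod_nonneg intro!: prod_le_1)
  then show "integrable M (\<lambda>\<omega>. \<Prod>i\<in>J. q \<omega> i)" "integrable M (\<lambda>\<omega>. \<Prod>i\<in>J. 1 - q \<omega> i)"
    using meas by (auto intro!: integrable_const_bound[where B = 1])
qed

lemma (in finite_measure) cond_prob_aggregate_integrable_component:
  assumes "cond_prob_aggregate M F q r n" and "i < n"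
  shows "integrable M (\<lambda>\<omega>. q \<omega> i)"
  using cond_prob_aggregate_integrable(1)[OF assms(1), of "{i}"] assms(2) by simp

lemma (in finite_measure_subalgebra) cond_prob_aggregate_keeps_0_1:
  assumes agg: "cond_prob_aggregate M F q r n" and i: "i < n"
    and r: "(\<lambda>\<omega>. r \<omega> i) \<in> borel_measurable F"
  shows "AE \<omega> in M. r \<omega> i \<in> {0, 1} \<longrightarrow> q \<omega> i = r \<omega> i"
proof -
  have q: "integrable M (\<lambda>\<omega>. q \<omega> i)"
    using cond_prob_aggregate_integrable_component[OF agg i] .
  have q_bounds: "AE \<omega> in M. 0 \<le> q \<omega> i \<and> q \<omega> i \<le> 1"
    and cond_exp: "AE \<omega> in M. real_cond_exp M F (\<lambda>\<omega>. q \<omega> i) \<omega> = r \<omega> i"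
    using agg i unfolding cond_prob_aggregate_def by blast+
  have "AE \<omega> in M. real_cond_exp M F (\<lambda>\<omega>. 1 - q \<omega> i) \<omega>
      = real_cond_exp M F (\<lambda>_. 1) \<omega> - real_cond_exp M F (\<lambda>\<omega>. q \<omega> i) \<omega>"
    using q by (intro real_cond_exp_diff) auto
  moreover have "AE \<omega> in M. real_cond_exp M F (\<lambda>_. 1) \<omega> = 1"
    by (intro real_cond_exp_F_meas) auto
  ultimately have cond_exp_compl: "AE \<omega> in M. real_cond_exp M F (\<lambda>\<omega>. 1 - q \<omega> i) \<omega> = 1 - r \<omega> i"
    using cond_exp by eventually_elim simp
  have "AE \<omega> in M. r \<omega> i = 0 \<longrightarrow> q \<omega> i = 0"
    using q q_bounds cond_exp r by (intro real_cond_exp_eq_0_imp_eq_0) auto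
  moreover have "AE \<omega> in M. 1 - r \<omega> i = 0 \<longrightarrow> 1 - q \<omega> i = 0"
    using q q_bounds cond_exp_compl r by (intro real_cond_exp_eq_0_imp_eq_0) auto
  ultimately show ?thesis by eventually_elim auto
qed

lemma (in finite_measure) cond_prob_aggregate_trans:
  assumes F: "subalgebra M F" and G: "subalgebra F G"
    and agg_qr: "cond_prob_aggregate M F q r n" and agg_rs: "cond_prob_aggregate M G r s n"
  shows "cond_prob_aggregate M G q s n"
  unfolding cond_prob_aggregate_def
proof (intro conjI allI impI)
  fix i assume i: "i < n"
  show "(\<lambda>\<omega>. q \<omega> i) \<in> borel_measurable M" "AE \<omega> in M. 0 \<le> q \<omega> i \<and> q \<omega> i \<le> 1"
    using agg_qr i unfolding cond_prob_aggregate_def by blast+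
  have "AE \<omega> in M. real_cond_exp M G (\<lambda>\<omega>. q \<omega> i) \<omega> = real_cond_exp M G (\<lambda>\<omega>. r \<omega> i) \<omega>"
    using agg_qr agg_rs i unfolding cond_prob_aggregate_def
    by (intro real_cond_exp_nested_eq[OF F G cond_prob_aggregate_integrable_component[OF agg_qr i]]) auto
  then show "AE \<omega> in M. real_cond_exp M G (\<lambda>\<omega>. q \<omega> i) \<omega> = s \<omega> i"
    using agg_rs i unfolding cond_prob_aggregate_def by auto
next
  show "AE \<omega> in M. (\<Sum>i<n. q \<omega> i) = (\<Sum>i<n. s \<omega> i)"
    using agg_qr agg_rs unfolding cond_prob_aggregate_def by auto
next
  fix J assume J: "J \<subseteq> {..<n}"
  have "AE \<omega> in M. real_cond_exp M G (\<lambda>\<omega>. \<Prod>i\<in>J. q \<omega> i) \<omega> \<le> real_cond_exp M G (\<lambda>\<omega>. \<Prod>i\<in>J. r \<omega> i) \<omega>"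
    using agg_qr J unfolding cond_prob_aggregate_def
    by (intro real_cond_exp_nested_mono[OF F G] cond_prob_aggregate_integrable[OF agg_qr J]
        cond_prob_aggregate_integrable[OF agg_rs J]) auto
  then show "AE \<omega> in M. real_cond_exp M G (\<lambda>\<omega>. \<Prod>i\<in>J. q \<omega> i) \<omega> \<le> (\<Prod>i\<in>J. s \<omega> i)"
    using agg_rs J unfolding cond_prob_aggregate_def by auto
  have "AE \<omega> in M. real_cond_exp M G (\<lambda>\<omega>. \<Prod>i\<in>J. 1 - q \<omega> i) \<omega> \<le> real_cond_exp M G (\<lambda>\<omega>. \<Prod>i\<in>J. 1 - r \<omega> i) \<omega>"
    using agg_qr J unfolding cond_prob_aggregate_def
    by (intro real_cond_exp_nested_mono[OF F G] cond_prob_aggregate_integrable[OF agg_qr J]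
        cond_prob_aggregate_integrable[OF agg_rs J]) auto
  then show "AE \<omega> in M. real_cond_exp M G (\<lambda>\<omega>. \<Prod>i\<in>J. 1 - q \<omega> i) \<omega> \<le> (\<Prod>i\<in>J. 1 - s \<omega> i)"
    using agg_rs J unfolding cond_prob_aggregate_def by auto
qed

lemma space_hist [simp]: "space (hist M p n h) = space M"
  unfolding hist_def by (simp add: space_measure_of_conv)

lemma sets_hist:
  "sets (hist M p n h) = sigma_sets (space M)
     {{\<omega> \<in> space M. p k \<omega> i \<in> B} | k i B. k \<le> h \<and> i < n \<and> B \<in> sets (borel :: real measure)}"
  unfolding hist_def by (subst sets_measure_of_conv) auto

lemma subalgebra_hist:
  assumes "\<forall>h. \<forall>i<n. (\<lambda>\<omega>. p h \<omega> i) \<in> borel_measurable M"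
  shows "subalgebra M (hist M p n h)"
  unfolding subalgebra_def space_hist sets_hist
proof (simp, rule sets.sigma_sets_subset, safe)
  fix k i and B :: "real set" assume "i < n" "B \<in> sets borel"
  then show "{\<omega> \<in> space M. p k \<omega> i \<in> B} \<in> sets M"
    using assms measurable_sets[of "\<lambda>\<omega>. p k \<omega> i" M borel B]
    by (auto simp: vimage_def Int_def conj_commute)
qed

lemma subalgebra_hist_mono:
  assumes "h \<le> h'"
  shows "subalgebra (hist M p n h') (hist M p n h)"
  unfolding subalgebra_def space_hist sets_hist
  by (intro conjI refl sigma_sets_subseteq) (use assms in force)

lemma measurable_hist:
  assumes "k \<le> h" "i < n"
  shows "(\<lambda>\<omega>. p k \<omega> i) \<in> borel_measurable (hist M p n h)"
proof (rule measurableI)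
  fix B :: "real set" assume "B \<in> sets borel"
  then have "{\<omega> \<in> space M. p k \<omega> i \<in> B} \<in> sets (hist M p n h)"
    unfolding sets_hist using assms by (intro sigma_sets.Basic) blast
  then show "(\<lambda>\<omega>. p k \<omega> i) -` B \<inter> space (hist M p n h) \<in> sets (hist M p n h)"
    by (simp add: vimage_def Int_def conj_commute)
qed simp

lemma card_positive_le:
  fixes x y :: "nat \<Rightarrow> real"
  assumes "\<forall>i<n. 0 \<le> x i" and "\<forall>i<n. x i = 0 \<longrightarrow> y i = 0"
  shows "card {i. i < n \<and> 0 < y i} \<le> card {i. i < n \<and> 0 < x i}"
proof (rule card_mono)
  show "{i. i < n \<and> 0 < y i} \<subseteq> {i. i < n \<and> 0 < x i}"
    using assms by (force simp: order.order_iff_strict)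
qed simp

theorem lemma3:
  fixes M :: "'a measure" and p :: "nat \<Rightarrow> 'a \<Rightarrow> nat \<Rightarrow> real" and n :: nat
    and p0 :: "nat \<Rightarrow> real"
  assumes "prob_space M"
    and p0_range: "\<forall>i<n. 0 \<le> p0 i \<and> p0 i \<le> 1"
    and p0: "\<forall>\<omega>\<in>space M. \<forall>i<n. p 0 \<omega> i = p0 i"
    and meas: "\<forall>h. \<forall>i<n. (\<lambda>\<omega>. p h \<omega> i) \<in> borel_measurable M"
    and range: "\<forall>h. \<forall>\<omega>\<in>space M. \<forall>i<n. 0 \<le> p h \<omega> i \<and> p h \<omega> i \<le> 1"
    and agg: "\<forall>h\<ge>1. cond_prob_aggregate M (hist M p n (h - 1)) (p h) (p (h - 1)) n"
  shows "(\<forall>h. \<forall>i<n. AE \<omega> in M. p h \<omega> i \<in> {0, 1} \<longrightarrow> p (Suc h) \<omega> i = p h \<omega> i)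
       \<and> (\<forall>h h'. \<forall>i<n. h \<le> h' \<longrightarrow> (AE \<omega> in M. p h \<omega> i \<in> {0, 1} \<longrightarrow> p h' \<omega> i = p h \<omega> i))
       \<and> (\<forall>h. AE \<omega> in M. card {i. i < n \<and> p (Suc h) \<omega> i > 0} \<le> card {i. i < n \<and> p h \<omega> i > 0})
       \<and> (\<forall>h1 h2. h1 < h2 \<longrightarrow> cond_prob_aggregate M (hist M p n h1) (p h2) (p h1) n)"
proof -
  interpret prob_space M by fact
  have hist: "subalgebra M (hist M p n h)" for h
    using meas by (rule subalgebra_hist)
  have step: "cond_prob_aggregate M (hist M p n h) (p (Suc h)) (p h) n" for h
    using agg[rule_format, of "Suc h"] by simp
  have keep: "AE \<omega> in M. p h \<omega> i \<in> {0, 1} \<longrightarrow> p (Suc h) \<omega> i = p h \<omega> i" if "i < n" for h i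
  proof -
    interpret finite_measure_subalgebra M "hist M p n h" using hist by unfold_locales
    show ?thesis using step that by (intro cond_prob_aggregate_keeps_0_1 measurable_hist) auto
  qed
  have keep_later: "AE \<omega> in M. p h \<omega> i \<in> {0, 1} \<longrightarrow> p h' \<omega> i = p h \<omega> i"
    if "h \<le> h'" "i < n" for h h' i
    using that(1)
  proof (induction h' rule: dec_induct)
    case (step m)
    from step.IH keep[OF that(2), of m] show ?case by auto
  qed simp
  have "AE \<omega> in M. card {i. i < n \<and> p (Suc h) \<omega> i > 0} \<le> card {i. i < n \<and> p h \<omega> i > 0}" for h
  proof -
    have "AE \<omega> in M. \<forall>i\<in>{..<n}. p h \<omega> i \<in> {0, 1} \<longrightarrow> p (Suc h) \<omega> i = p h \<omega> i"
      using keep by (subst AE_finite_all) auto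
    then show ?thesis using range by (auto intro!: card_positive_le)
  qed
  moreover have "cond_prob_aggregate M (hist M p n h) (p (Suc h + k)) (p h) n" for h k
  proof (induction k)
    case (Suc k)
    show ?case using cond_prob_aggregate_trans[OF hist subalgebra_hist_mono step Suc.IH] by simp
  qed (simp add: step)
  then have "cond_prob_aggregate M (hist M p n h1) (p h2) (p h1) n" if "h1 < h2" for h1 h2
    using that by (metis Suc_le_eq le_add_diff_inverse)
  ultimately show ?thesis using keep keep_later by blast
qed

end
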